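(* For every positive integer $t$ there exist constants $\alpha,\beta,\gamma>0$ such that the following holds. Let $s$ be a positive integer and $n\geq 2$ an integer, and let $G$ be a semilinear graph of complexity $t$ on $n$ vertices that contains no clique of size $s$. Then $$\chi(G)\leq \alpha s^{\beta}(\log n)^{\gamma}.$$
   Context: A function $f:\mathbb{R}^{m}\to\mathbb{R}$ is linear if $f(\mathbf{x})=b+\sum_{i=1}^m a_i\mathbf{x}(i)$ for some reals $a_1,\dots,a_m,b$. A (finite, simple) graph $G$ is semilinear of complexity $t$ if $V(G)\subset\mathbb{R}^d$ for some positive integer $d$, and there are $t$ linear functions $f_1,\dots,f_t:\mathbb{R}^d\times\mathbb{R}^d\to\mathbb{R}$ and a Boolean function $\phi:\{\mathrm{F},\mathrm{T}\}^{3t}\to\{\mathrm{F},\mathrm{T}\}$ such that for distinct $\mathbf{x},\mathbf{y}\in V(G)$, $\{\mathbf{x},\mathbf{y}\}$ is an edge iff $\phi\big(\{f_i(\mathbf{x},\mathbf{y})<0,\ f_i(\mathbf{x},\mathbf{y})\leq 0,\ f_i(\mathbf{x},\mathbf{y})=0\}_{i\in[t]}\big)=\mathrm{T}$; it is assumed that this truth value is unchanged when $\mathbf{x}$ and $\mathbf{y}$ are swapped. $\chi(G)$ is the chromatic number. *)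

theory Defs
  imports Complex_Main
begin

text \<open>Points of R^d are represented as real lists of length d.
A finite simple graph is a finite vertex set V with a symmetric irreflexive
edge relation E supported on V.\<close>

definition simple_graph :: "'a set \<Rightarrow> ('a \<Rightarrow> 'a \<Rightarrow> bool) \<Rightarrow> bool" where
  "simple_graph V E \<longleftrightarrow> finite V \<and>
     (\<forall>x y. E x y \<longrightarrow> x \<in> V \<and> y \<in> V \<and> x \<noteq> y) \<and>
     (\<forall>x y. E x y \<longrightarrow> E y x)"

definition lin_fun :: "nat \<Rightarrow> (nat \<Rightarrow> real) \<Rightarrow> (nat \<Rightarrow> real) \<Rightarrow> real \<Rightarrow> real list \<Rightarrow> real list \<Rightarrow> real" where
  "lin_fun d a c b x y = b + (\<Sum>i<d. a i * x ! i) + (\<Sum>i<d. c i * y ! i)"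

definition sign_pattern :: "nat \<Rightarrow> (nat \<Rightarrow> real list \<Rightarrow> real list \<Rightarrow> real) \<Rightarrow> real list \<Rightarrow> real list \<Rightarrow> bool list" where
  "sign_pattern t f x y = concat (map (\<lambda>i. [f i x y < 0, f i x y \<le> 0, f i x y = 0]) [0..<t])"

definition semilinear :: "nat \<Rightarrow> real list set \<Rightarrow> (real list \<Rightarrow> real list \<Rightarrow> bool) \<Rightarrow> bool" where
  "semilinear t V E \<longleftrightarrow>
    (\<exists>d::nat. d > 0 \<and> (\<forall>x\<in>V. length x = d) \<and>
      (\<exists>(a :: nat \<Rightarrow> nat \<Rightarrow> real) (c :: nat \<Rightarrow> nat \<Rightarrow> real) (b :: nat \<Rightarrow> real)
         (\<phi> :: bool list \<Rightarrow> bool).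
        (\<forall>x\<in>V. \<forall>y\<in>V. x \<noteq> y \<longrightarrow>
           (E x y \<longleftrightarrow> \<phi> (sign_pattern t (\<lambda>i. lin_fun d (a i) (c i) (b i)) x y)))))"

definition has_clique :: "'a set \<Rightarrow> ('a \<Rightarrow> 'a \<Rightarrow> bool) \<Rightarrow> nat \<Rightarrow> bool" where
  "has_clique V E s \<longleftrightarrow> (\<exists>K. K \<subseteq> V \<and> finite K \<and> card K = s \<and>
      (\<forall>x\<in>K. \<forall>y\<in>K. x \<noteq> y \<longrightarrow> E x y))"

definition chromatic_number :: "'a set \<Rightarrow> ('a \<Rightarrow> 'a \<Rightarrow> bool) \<Rightarrow> nat" where
  "chromatic_number V E = (LEAST k. \<exists>col :: 'a \<Rightarrow> nat.
      (\<forall>x\<in>V. col x < k) \<and> (\<forall>x\<in>V. \<forall>y\<in>V. E x y \<longrightarrow> col x \<noteq> col y))"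

end

theory Submission
  imports Defs "HOL-Library.Comparator" "HOL-Library.FuncSet"
begin

(*
  Each linear form splits as f_i(x, y) = P_i(x) - Q_i(y), so adjacency of distinct x, y depends
  only on the vector of comparisons of P_i x with Q_i y, i < t. Replace the values of P_i and Q_i
  by their ranks, which are below 2n. For a pair of ranks (a, b) let l be the least level at which
  a and b lie in the same aligned dyadic block of length 2^l, and color x by these levels together
  with the orders of P_i x and Q_i x: one of (3 (log n + O(1)))^t classes. Within a class, P_i x
  compares with Q_i y as the level-l blocks of x and y compare, ties being broken by the recorded
  order of P_i x and Q_i x. Hence for every comparison vector pi the relation "same class, comparison
  vector pi, and pi is an edge pattern" is transitive, its chains are cliques, and Mirsky's theorem
  colors it properly with s colors. Combining the class with these 3^t colorings gives
  chi(G) <= (24 ln n)^t s^(3^t).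
*)

section \<open>Mirsky colorings\<close>

definition height_below :: "('a \<Rightarrow> 'a \<Rightarrow> bool) \<Rightarrow> 'a set \<Rightarrow> 'a \<Rightarrow> nat" where
  "height_below R V x =
     Max {card K | K. K \<subseteq> V \<and> pairwise (\<lambda>u w. R u w \<or> R w u) K \<and> (\<forall>k\<in>K. R k x)}"

lemma finite_chain_sizes:
  assumes "finite V"
  shows "finite {card K | K. K \<subseteq> V \<and> pairwise (\<lambda>u w. R u w \<or> R w u) K \<and> (\<forall>k\<in>K. R k x)}"
proof (rule finite_subset)
  show "{card K | K. K \<subseteq> V \<and> pairwise (\<lambda>u w. R u w \<or> R w u) K \<and> (\<forall>k\<in>K. R k x)} \<subseteq> {..card V}"
  proof
    fix n assume "n \<in> {card K | K. K \<subseteq> V \<and> pairwise (\<lambda>u w. R u w \<or> R w u) K \<and> (\<forall>k\<in>K. R k x)}"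
    then obtain K where "n = card K" "K \<subseteq> V"
      by blast
    then show "n \<in> {..card V}"
      using card_mono[OF assms] by simp
  qed
qed simp

lemma height_below_attained:
  assumes "finite V"
  obtains K where "K \<subseteq> V" "pairwise (\<lambda>u w. R u w \<or> R w u) K" "\<forall>k\<in>K. R k x"
    "card K = height_below R V x"
proof -
  let ?S = "{card K | K. K \<subseteq> V \<and> pairwise (\<lambda>u w. R u w \<or> R w u) K \<and> (\<forall>k\<in>K. R k x)}"
  have "card {} \<in> ?S"
    by (intro CollectI exI[of _ "{}"]) simp
  then have "Max ?S \<in> ?S"
    by (intro Max_in[OF finite_chain_sizes[OF assms]]) blast
  then obtain K where "Max ?S = card K" "K \<subseteq> V" "pairwise (\<lambda>u w. R u w \<or> R w u) K" "\<forall>k\<in>K. R k x"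
    by blast
  then show thesis
    using that unfolding height_below_def by simp
qed

lemma card_le_height_below:
  assumes "finite V" "K \<subseteq> V" "pairwise (\<lambda>u w. R u w \<or> R w u) K" "\<forall>k\<in>K. R k x"
  shows "card K \<le> height_below R V x"
  unfolding height_below_def
proof (rule Max_ge[OF finite_chain_sizes[OF assms(1)]])
  show "card K \<in> {card K | K. K \<subseteq> V \<and> pairwise (\<lambda>u w. R u w \<or> R w u) K \<and> (\<forall>k\<in>K. R k x)}"
    using assms(2-4) by (intro CollectI exI[of _ K]) simp
qed

lemma strict_order_height_coloring:
  assumes "finite V" and irrefl: "irreflp_on V R" and trans: "transp_on V R"
    and chains: "\<And>K. K \<subseteq> V \<Longrightarrow> pairwise (\<lambda>u w. R u w \<or> R w u) K \<Longrightarrow> card K < s"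
  shows "x \<in> V \<Longrightarrow> height_below R V x < s"
    and "x \<in> V \<Longrightarrow> y \<in> V \<Longrightarrow> R x y \<Longrightarrow> height_below R V x < height_below R V y"
proof -
  assume "x \<in> V"
  obtain K where K: "K \<subseteq> V" "pairwise (\<lambda>u w. R u w \<or> R w u) K" "\<forall>k\<in>K. R k x"
      "card K = height_below R V x"
    using height_below_attained[OF \<open>finite V\<close>] by blast
  have "x \<notin> K" "finite K"
    using K(1,3) irreflp_onD[OF irrefl \<open>x \<in> V\<close>] \<open>finite V\<close> finite_subset by blast+
  then have card_K: "card (insert x K) = height_below R V x + 1"
    using K(4) by simp
  have chain: "pairwise (\<lambda>u w. R u w \<or> R w u) (insert x K)"
    using K(2,3) by (auto simp: pairwise_insert)
  show "height_below R V x < s"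
    using chains[OF _ chain] K(1) \<open>x \<in> V\<close> card_K by simp
  assume "y \<in> V" "R x y"
  then have "\<forall>k\<in>insert x K. R k y"
    using K(1,3) \<open>x \<in> V\<close> \<open>y \<in> V\<close> transp_onD[OF trans, of _ x y] by auto
  then have "card (insert x K) \<le> height_below R V y"
    using K(1) \<open>x \<in> V\<close> chain by (intro card_le_height_below[OF \<open>finite V\<close>]) auto
  then show "height_below R V x < height_below R V y"
    using card_K by simp
qed

lemma transp_on_oriented:
  assumes "transp_on V R"
  shows "transp_on V (\<lambda>x y. R x y \<and> (R y x \<longrightarrow> f x < (f y :: nat)))"
proof (rule transp_onI)
  fix x y z assume V: "x \<in> V" "y \<in> V" "z \<in> V"
    and xy: "R x y \<and> (R y x \<longrightarrow> f x < f y)" and yz: "R y z \<and> (R z y \<longrightarrow> f y < f z)"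
  have "R x z"
    using transp_onD[OF assms V] xy yz by blast
  moreover have "f x < f z" if "R z x"
  proof -
    have "R y x" "R z y"
      using transp_onD[OF assms V(2,3,1)] transp_onD[OF assms V(3,1,2)] that xy yz by blast+
    then show ?thesis
      using xy yz by simp
  qed
  ultimately show "R x z \<and> (R z x \<longrightarrow> f x < f z)"
    by blast
qed

lemma transitive_relation_coloring:
  assumes "finite V" and trans: "transp_on V R"
    and chains: "\<And>K. K \<subseteq> V \<Longrightarrow> pairwise (\<lambda>u w. R u w \<or> R w u) K \<Longrightarrow> card K < s"
  obtains h where "\<And>x. x \<in> V \<Longrightarrow> h x < s"
    and "\<And>x y. x \<in> V \<Longrightarrow> y \<in> V \<Longrightarrow> x \<noteq> y \<Longrightarrow> R x y \<Longrightarrow> h x \<noteq> h y"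
proof -
  obtain f :: "'a \<Rightarrow> nat" where f: "inj_on f V"
    using finite_imp_inj_to_nat_seg[OF \<open>finite V\<close>] by blast
  \<comment> \<open>Orienting the symmetric pairs of R by f gives a strict order with the same chains.\<close>
  define R' where "R' x y \<longleftrightarrow> R x y \<and> (R y x \<longrightarrow> f x < f y)" for x y
  have trans': "transp_on V R'"
    unfolding R'_def by (rule transp_on_oriented[OF trans])
  have irrefl': "irreflp_on V R'"
    unfolding R'_def by (simp add: irreflp_onI)
  have chains': "card K < s" if "K \<subseteq> V" "pairwise (\<lambda>u w. R' u w \<or> R' w u) K" for K
  proof -
    have "pairwise (\<lambda>u w. R u w \<or> R w u) K"
      using that(2) unfolding pairwise_def R'_def by blast
    then show ?thesis
      by (rule chains[OF that(1)])
  qed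
  have height_less: "height_below R' V x < s" if "x \<in> V" for x
    by (rule strict_order_height_coloring(1)[OF \<open>finite V\<close> irrefl' trans']) (use chains' that in auto)
  have height_mono: "height_below R' V x < height_below R' V y" if "x \<in> V" "y \<in> V" "R' x y" for x y
    by (rule strict_order_height_coloring(2)[OF \<open>finite V\<close> irrefl' trans']) (use chains' that in auto)
  show thesis
  proof (rule that[of "height_below R' V"])
    show "height_below R' V x < s" if "x \<in> V" for x
      using height_less[OF that] .
  next
    fix x y assume xy: "x \<in> V" "y \<in> V" "x \<noteq> y" "R x y"
    then have "R' x y \<or> R' y x"
      using inj_on_contraD[OF f \<open>x \<noteq> y\<close>] unfolding R'_def by auto
    then show "height_below R' V x \<noteq> height_below R' V y"
      using height_mono[of x y] height_mono[of y x] xy(1,2) by fastforce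
  qed
qed

lemma chromatic_number_le_card:
  assumes "finite C"
    and col_in: "\<And>x. x \<in> V \<Longrightarrow> col x \<in> C"
    and proper: "\<And>x y. x \<in> V \<Longrightarrow> y \<in> V \<Longrightarrow> E x y \<Longrightarrow> col x \<noteq> col y"
  shows "chromatic_number V E \<le> card C"
proof -
  obtain g where g: "bij_betw g C {0..<card C}"
    using ex_bij_betw_finite_nat[OF \<open>finite C\<close>] by blast
  have "g (col x) < card C" if "x \<in> V" for x
    using bij_betwE[OF g] col_in[OF that] by auto
  moreover have "g (col x) \<noteq> g (col y)" if "x \<in> V" "y \<in> V" "E x y" for x y
    using inj_on_contraD[OF bij_betw_imp_inj_on[OF g] proper[OF that]] col_in that(1,2) by blast
  ultimately show ?thesis
    unfolding chromatic_number_def by (intro Least_le exI[of _ "g \<circ> col"]) simp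
qed

lemma card_less_if_pairwise_adjacent:
  assumes "\<not> has_clique V E s" "C \<subseteq> V" "pairwise E C"
  shows "card C < s"
proof (rule ccontr)
  assume "\<not> card C < s"
  then have "s \<le> card C"
    by simp
  then obtain T where T: "T \<subseteq> C" "card T = s" "finite T"
    by (rule obtain_subset_with_card_n)
  have "\<forall>x\<in>T. \<forall>y\<in>T. x \<noteq> y \<longrightarrow> E x y"
    using pairwise_subset[OF assms(3) T(1)] unfolding pairwise_def .
  then have "has_clique V E s"
    unfolding has_clique_def using T assms(2) by blast
  then show False
    using assms(1) by blast
qed

lemma transitive_subrelation_coloring:
  assumes G: "simple_graph V E" and no_clique: "\<not> has_clique V E s" and trans: "transp_on V R"
    and edge: "\<And>x y. x \<in> V \<Longrightarrow> y \<in> V \<Longrightarrow> x \<noteq> y \<Longrightarrow> R x y \<Longrightarrow> E x y"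
  obtains h where "\<And>x. x \<in> V \<Longrightarrow> h x < s"
    and "\<And>x y. x \<in> V \<Longrightarrow> y \<in> V \<Longrightarrow> x \<noteq> y \<Longrightarrow> R x y \<Longrightarrow> h x \<noteq> h y"
proof (rule transitive_relation_coloring[OF _ trans])
  show "finite V"
    using G unfolding simple_graph_def by blast
  fix C assume C: "C \<subseteq> V" "pairwise (\<lambda>u w. R u w \<or> R w u) C"
  have "E u w" if "u \<in> C" "w \<in> C" "u \<noteq> w" for u w
  proof -
    have "u \<in> V" "w \<in> V" "R u w \<or> R w u"
      using C that unfolding pairwise_def by blast+
    then show ?thesis
      using edge G \<open>u \<noteq> w\<close> unfolding simple_graph_def by metis
  qed
  then show "card C < s"
    using card_less_if_pairwise_adjacent[OF no_clique C(1)] unfolding pairwise_def by blast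
qed (rule that)

lemma chromatic_number_le_transitive_cover:
  fixes R :: "'p \<Rightarrow> 'a \<Rightarrow> 'a \<Rightarrow> bool" and \<kappa> :: "'a \<Rightarrow> 'k"
  assumes G: "simple_graph V E" and no_clique: "\<not> has_clique V E s"
    and "finite K" and \<kappa>: "\<And>x. x \<in> V \<Longrightarrow> \<kappa> x \<in> K" and "finite Pat"
    and trans: "\<And>\<pi>. \<pi> \<in> Pat \<Longrightarrow> transp_on V (R \<pi>)"
    and edge: "\<And>\<pi> x y. \<pi> \<in> Pat \<Longrightarrow> x \<in> V \<Longrightarrow> y \<in> V \<Longrightarrow> x \<noteq> y \<Longrightarrow> R \<pi> x y \<Longrightarrow> E x y"
    and cover: "\<And>x y. E x y \<Longrightarrow> \<kappa> x = \<kappa> y \<Longrightarrow> \<exists>\<pi>\<in>Pat. R \<pi> x y"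
  shows "chromatic_number V E \<le> card K * s ^ card Pat"
proof -
  have "\<forall>\<pi>\<in>Pat. \<exists>h. (\<forall>x\<in>V. h x < s) \<and> (\<forall>x\<in>V. \<forall>y\<in>V. x \<noteq> y \<longrightarrow> R \<pi> x y \<longrightarrow> h x \<noteq> h y)"
  proof
    fix \<pi> assume "\<pi> \<in> Pat"
    show "\<exists>h. (\<forall>x\<in>V. h x < s) \<and> (\<forall>x\<in>V. \<forall>y\<in>V. x \<noteq> y \<longrightarrow> R \<pi> x y \<longrightarrow> h x \<noteq> h y)"
    proof (rule transitive_subrelation_coloring[OF G no_clique trans[OF \<open>\<pi> \<in> Pat\<close>]])
      show "E x y" if "x \<in> V" "y \<in> V" "x \<noteq> y" "R \<pi> x y" for x y
        using edge[OF \<open>\<pi> \<in> Pat\<close> that] .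
    qed blast
  qed
  from bchoice[OF this] obtain H where H: "\<forall>\<pi>\<in>Pat. (\<forall>x\<in>V. H \<pi> x < s) \<and>
      (\<forall>x\<in>V. \<forall>y\<in>V. x \<noteq> y \<longrightarrow> R \<pi> x y \<longrightarrow> H \<pi> x \<noteq> H \<pi> y)"
    by blast
  have "chromatic_number V E \<le> card (K \<times> (Pat \<rightarrow>\<^sub>E {..<s}))"
  proof (rule chromatic_number_le_card[where col = "\<lambda>x. (\<kappa> x, restrict (\<lambda>\<pi>. H \<pi> x) Pat)"])
    show "finite (K \<times> (Pat \<rightarrow>\<^sub>E {..<s}))"
      using \<open>finite K\<close> \<open>finite Pat\<close> by (simp add: finite_PiE)
    show "(\<kappa> x, restrict (\<lambda>\<pi>. H \<pi> x) Pat) \<in> K \<times> (Pat \<rightarrow>\<^sub>E {..<s})" if "x \<in> V" for x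
      using \<kappa> H that by auto
    fix x y assume xy: "x \<in> V" "y \<in> V" "E x y"
    show "(\<kappa> x, restrict (\<lambda>\<pi>. H \<pi> x) Pat) \<noteq> (\<kappa> y, restrict (\<lambda>\<pi>. H \<pi> y) Pat)"
    proof
      assume same: "(\<kappa> x, restrict (\<lambda>\<pi>. H \<pi> x) Pat) = (\<kappa> y, restrict (\<lambda>\<pi>. H \<pi> y) Pat)"
      then obtain \<pi> where "\<pi> \<in> Pat" "R \<pi> x y"
        using cover[OF xy(3)] by auto
      moreover have "H \<pi> x = H \<pi> y"
        using fun_cong[of _ _ \<pi>, OF arg_cong[where f = snd, OF same]] \<open>\<pi> \<in> Pat\<close> by simp
      moreover have "x \<noteq> y"
        using G xy(3) unfolding simple_graph_def by blast
      ultimately show False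
        using H xy(1,2) by blast
    qed
  qed
  also have "\<dots> = card K * s ^ card Pat"
    using \<open>finite K\<close> \<open>finite Pat\<close> by (simp add: card_cartesian_product card_PiE)
  finally show ?thesis .
qed

section \<open>Dyadic blocks\<close>

lemma compare_default_eq:
  "compare default x y = (if x < y then Less else if x = y then Equiv else Greater)"
  by (cases "compare default x y") auto

lemma UNIV_comp: "UNIV = {Less, Equiv, Greater}"
  using comp.exhaust by auto

lemma finite_UNIV_comp: "finite (UNIV :: comp set)"
  by (simp add: UNIV_comp)

lemma card_UNIV_comp: "card (UNIV :: comp set) = 3"
  by (simp add: UNIV_comp)

definition dyadic_level :: "nat \<Rightarrow> nat \<Rightarrow> nat" where
  "dyadic_level a b = (LEAST l. a div 2 ^ l = b div 2 ^ l)"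

lemma dyadic_level_commute: "dyadic_level a b = dyadic_level b a"
  unfolding dyadic_level_def by (simp add: eq_commute)

lemma div_dyadic_level_eq: "a div 2 ^ dyadic_level a b = b div 2 ^ dyadic_level a b"
proof -
  have "a < 2 ^ (a + b)" "b < 2 ^ (a + b)"
    by (rule less_le_trans[OF less_exp], simp)+
  then have "a div 2 ^ (a + b) = b div 2 ^ (a + b)"
    by simp
  then show ?thesis
    unfolding dyadic_level_def by (rule LeastI)
qed

lemma dyadic_level_le: "a div 2 ^ l = b div 2 ^ l \<Longrightarrow> dyadic_level a b \<le> l"
  unfolding dyadic_level_def by (rule Least_le)

lemma dyadic_level_le_if_less_power: "a < 2 ^ k \<Longrightarrow> b < 2 ^ k \<Longrightarrow> dyadic_level a b \<le> k"
  by (rule dyadic_level_le) simp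

lemma dyadic_level_eq_0_iff: "dyadic_level a b = 0 \<longleftrightarrow> a = b"
proof
  show "dyadic_level a b = 0 \<Longrightarrow> a = b"
    using div_dyadic_level_eq[of a b] by simp
  show "a = b \<Longrightarrow> dyadic_level a b = 0"
    using dyadic_level_le[where l = 0] by simp
qed

lemma div_pred_dyadic_level:
  assumes "a < b"
  defines "l \<equiv> dyadic_level a b"
  shows "a div 2 ^ (l - 1) = 2 * (a div 2 ^ l)" and "b div 2 ^ (l - 1) = 2 * (a div 2 ^ l) + 1"
proof -
  have "l > 0"
    using assms dyadic_level_eq_0_iff[of a b] unfolding l_def by simp
  then have pow: "(2::nat) ^ l = 2 ^ (l - 1) * 2"
    by (metis Suc_diff_1 power_Suc2)
  define u v where "u = a div 2 ^ (l - 1)" and "v = b div 2 ^ (l - 1)"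
  have "u \<noteq> v"
    using \<open>l > 0\<close> not_less_Least[of "l - 1" "\<lambda>l. a div 2 ^ l = b div 2 ^ l"]
    unfolding u_def v_def l_def dyadic_level_def by simp
  moreover have "u \<le> v"
    unfolding u_def v_def using \<open>a < b\<close> by (simp add: div_le_mono)
  moreover have a_block: "a div 2 ^ l = u div 2" and "b div 2 ^ l = v div 2"
    unfolding u_def v_def pow by (simp_all add: div_mult2_eq)
  then have "u div 2 = v div 2"
    using div_dyadic_level_eq[of a b] unfolding l_def by simp
  ultimately have "u = 2 * (u div 2) \<and> v = 2 * (u div 2) + 1"
    by presburger
  then show "a div 2 ^ (l - 1) = 2 * (a div 2 ^ l)" and "b div 2 ^ (l - 1) = 2 * (a div 2 ^ l) + 1"
    unfolding a_block u_def[symmetric] v_def[symmetric] by simp_all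
qed

definition dyadic_class :: "nat \<Rightarrow> nat \<Rightarrow> nat \<times> comp" where
  "dyadic_class a b = (dyadic_level a b, compare default a b)"

definition dyadic_block :: "nat \<Rightarrow> nat \<Rightarrow> nat" where
  "dyadic_block a b = a div 2 ^ dyadic_level a b"

lemma dyadic_class_mem: "a < 2 ^ k \<Longrightarrow> b < 2 ^ k \<Longrightarrow> dyadic_class a b \<in> {..k} \<times> UNIV"
  unfolding dyadic_class_def using dyadic_level_le_if_less_power by simp

lemma compare_same_dyadic_block:
  fixes a1 b1 a2 b2 :: nat
  assumes level: "dyadic_level a1 b1 = l" "dyadic_level a2 b2 = l"
    and order: "compare default a1 b1 = compare default a2 b2"
    and block: "a1 div 2 ^ l = a2 div 2 ^ l"
  shows "compare default a1 b2 = compare default a1 b1"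
proof (cases a1 b1 rule: linorder_cases)
  case equal
  then have "l = 0" "a2 = b2"
    using level(1) order dyadic_level_eq_0_iff unfolding compare_default_eq by (auto split: if_splits)
  then show ?thesis
    using block equal by simp
next
  case less
  then have "a2 < b2"
    using order unfolding compare_default_eq by (auto split: if_splits)
  then have "a1 div 2 ^ (l - 1) < b2 div 2 ^ (l - 1)"
    using div_pred_dyadic_level[OF less] div_pred_dyadic_level[of a2 b2] level block by simp
  then have "a1 < b2"
    using div_le_mono[of b2 a1] by (meson not_less)
  then show ?thesis
    using less unfolding compare_default_eq by simp
next
  case greater
  then have "b2 < a2"
    using order unfolding compare_default_eq by (auto split: if_splits)
  moreover have "a1 div 2 ^ l = b1 div 2 ^ l" "a2 div 2 ^ l = b2 div 2 ^ l"
    using div_dyadic_level_eq[of a1 b1] div_dyadic_level_eq[of a2 b2] level by simp_all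
  ultimately have "b2 div 2 ^ (l - 1) < a1 div 2 ^ (l - 1)"
    using div_pred_dyadic_level[OF greater] div_pred_dyadic_level[of b2 a2] level block
    by (simp add: dyadic_level_commute)
  then have "b2 < a1"
    using div_le_mono[of a1 b2] by (meson not_less)
  then show ?thesis
    using greater unfolding compare_default_eq by simp
qed

definition block_compare :: "comp \<Rightarrow> nat \<Rightarrow> nat \<Rightarrow> comp" where
  "block_compare c p q = (if p = q then c else compare default p q)"

lemma block_compare_trans:
  "block_compare c p q = block_compare c q r \<Longrightarrow> block_compare c p r = block_compare c p q"
  unfolding block_compare_def compare_default_eq by (auto split: if_splits)

lemma compare_eq_block_compare:
  assumes "dyadic_class a1 b1 = dyadic_class a2 b2"
  shows "compare default a1 b2
    = block_compare (snd (dyadic_class a1 b1)) (dyadic_block a1 b1) (dyadic_block a2 b2)"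
proof -
  define l where "l = dyadic_level a1 b1"
  have level: "dyadic_level a1 b1 = l" "dyadic_level a2 b2 = l"
    and order: "compare default a1 b1 = compare default a2 b2"
    using assms unfolding l_def dyadic_class_def by simp_all
  show ?thesis
  proof (cases "a1 div 2 ^ l = a2 div 2 ^ l")
    case True
    then show ?thesis
      using compare_same_dyadic_block[OF level order True] level
      unfolding block_compare_def dyadic_block_def dyadic_class_def by simp
  next
    case False
    have "a2 div 2 ^ l = b2 div 2 ^ l"
      using div_dyadic_level_eq[of a2 b2] level(2) by simp
    then show ?thesis
      using False level div_le_mono[of a1 b2 "2 ^ l"] div_le_mono[of b2 a1 "2 ^ l"]
      unfolding block_compare_def dyadic_block_def compare_default_eq by (auto simp: not_less)
  qed
qed

lemma dyadic_class_compare_trans: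
  assumes "dyadic_class a1 b1 = dyadic_class a2 b2" "dyadic_class a2 b2 = dyadic_class a3 b3"
    and "compare default a1 b2 = compare default a2 b3"
  shows "compare default a1 b3 = compare default a1 b2"
proof -
  let ?c = "snd (dyadic_class a1 b1)"
  have "block_compare ?c (dyadic_block a1 b1) (dyadic_block a2 b2)
      = block_compare ?c (dyadic_block a2 b2) (dyadic_block a3 b3)"
    using assms compare_eq_block_compare[OF assms(1)] compare_eq_block_compare[OF assms(2)] by simp
  then have "block_compare ?c (dyadic_block a1 b1) (dyadic_block a3 b3)
      = block_compare ?c (dyadic_block a1 b1) (dyadic_block a2 b2)"
    by (rule block_compare_trans)
  then show ?thesis
    using compare_eq_block_compare[OF assms(1)] compare_eq_block_compare[OF trans[OF assms(1,2)]]
    by simp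
qed

section \<open>Comparison graphs\<close>

definition rank_in :: "'a::linorder set \<Rightarrow> 'a \<Rightarrow> nat" where
  "rank_in W u = card {w \<in> W. w < u}"

lemma rank_in_less_rank_in:
  assumes "finite W" "u \<in> W" "u < v"
  shows "rank_in W u < rank_in W v"
proof -
  have "{w \<in> W. w < u} \<subset> {w \<in> W. w < v}"
    using assms by auto
  then show ?thesis
    unfolding rank_in_def using assms(1) by (simp add: psubset_card_mono)
qed

lemma compare_rank_in:
  assumes "finite W" "u \<in> W" "v \<in> W"
  shows "compare default (rank_in W u) (rank_in W v) = compare default u v"
proof (cases u v rule: linorder_cases)
  case less
  then show ?thesis
    using rank_in_less_rank_in[OF assms(1,2) less] by (simp add: compare_default_eq)
next
  case equal
  then show ?thesis
    by (simp add: compare_default_eq)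
next
  case greater
  then show ?thesis
    using rank_in_less_rank_in[OF assms(1,3) greater] by (auto simp: compare_default_eq)
qed

lemma rank_in_less_card:
  assumes "finite W" "u \<in> W"
  shows "rank_in W u < card W"
proof -
  have "{w \<in> W. w < u} \<subset> W"
    using assms by auto
  then show ?thesis
    unfolding rank_in_def using assms(1) by (simp add: psubset_card_mono)
qed

lemma chromatic_number_nat_comparison_graph:
  fixes p q :: "nat \<Rightarrow> 'a \<Rightarrow> nat" and \<phi> :: "comp list \<Rightarrow> bool"
  assumes G: "simple_graph V E" and no_clique: "\<not> has_clique V E s"
    and bounded: "\<And>i v. v \<in> V \<Longrightarrow> p i v < 2 ^ m" "\<And>i v. v \<in> V \<Longrightarrow> q i v < 2 ^ m"
    and E_iff: "\<And>x y. x \<in> V \<Longrightarrow> y \<in> V \<Longrightarrow> x \<noteq> y \<Longrightarrow>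
      E x y \<longleftrightarrow> \<phi> (map (\<lambda>i. compare default (p i x) (q i y)) [0..<t])"
  shows "chromatic_number V E \<le> (3 * (m + 1)) ^ t * s ^ 3 ^ t"
proof -
  define cls where "cls v = map (\<lambda>i. dyadic_class (p i v) (q i v)) [0..<t]" for v
  define cmps where "cmps x y = map (\<lambda>i. compare default (p i x) (q i y)) [0..<t]" for x y
  define R where "R \<pi> x y \<longleftrightarrow> cls x = cls y \<and> cmps x y = \<pi> \<and> \<phi> \<pi>" for \<pi> x y
  let ?K = "{cs. set cs \<subseteq> {..m} \<times> (UNIV :: comp set) \<and> length cs = t}"
  let ?Pat = "{\<pi> :: comp list. set \<pi> \<subseteq> UNIV \<and> length \<pi> = t}"
  have "chromatic_number V E \<le> card ?K * s ^ card ?Pat"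
  proof (rule chromatic_number_le_transitive_cover[where R = R and \<kappa> = cls, OF G no_clique])
    show "finite ?K" "finite ?Pat"
      by (rule finite_lists_length_eq, simp add: finite_UNIV_comp)+
    show "cls v \<in> ?K" if "v \<in> V" for v
      using dyadic_class_mem[OF bounded[OF that]] unfolding cls_def by (simp add: image_subset_iff)
    show "transp_on V (R \<pi>)" for \<pi>
    proof (rule transp_onI)
      fix x y z assume "R \<pi> x y" "R \<pi> y z"
      then have "cls x = cls y" "cls y = cls z" "cmps x y = cmps y z"
        unfolding R_def by auto
      then have "compare default (p i x) (q i z) = compare default (p i x) (q i y)" if "i < t" for i
        using dyadic_class_compare_trans[of "p i x" "q i x" "p i y" "q i y" "p i z" "q i z"] that
        unfolding cls_def cmps_def map_eq_conv by simp
      then have "cmps x z = cmps x y"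
        unfolding cmps_def by simp
      then show "R \<pi> x z"
        using \<open>R \<pi> x y\<close> \<open>R \<pi> y z\<close> unfolding R_def by simp
    qed
    show "E x y" if "x \<in> V" "y \<in> V" "x \<noteq> y" "R \<pi> x y" for \<pi> x y
      using that E_iff unfolding R_def cmps_def by simp
    show "\<exists>\<pi>\<in>?Pat. R \<pi> x y" if "E x y" "cls x = cls y" for x y
    proof -
      have "x \<in> V" "y \<in> V" "x \<noteq> y"
        using G that(1) unfolding simple_graph_def by blast+
      then show ?thesis
        using E_iff that unfolding R_def cmps_def by auto
    qed
  qed
  also have "\<dots> = (3 * (m + 1)) ^ t * s ^ 3 ^ t"
    using card_lists_length_eq[OF finite_UNIV_comp, of t]
    by (simp add: card_lists_length_eq finite_UNIV_comp card_cartesian_product card_UNIV_comp mult.commute)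
  finally show ?thesis .
qed

lemma rank_in_Un_image_less:
  assumes "finite V" "card V \<le> 2 ^ k" "u \<in> f ` V \<union> g ` V"
  shows "rank_in (f ` V \<union> g ` V) u < 2 ^ (k + 1)"
proof -
  have "rank_in (f ` V \<union> g ` V) u < card (f ` V \<union> g ` V)"
    using assms(1,3) by (intro rank_in_less_card) auto
  also have "\<dots> \<le> card (f ` V) + card (g ` V)"
    by (rule card_Un_le)
  also have "\<dots> \<le> 2 ^ k + 2 ^ k"
    using card_image_le[OF assms(1)] assms(2) by (meson add_le_mono le_trans)
  finally show ?thesis
    by simp
qed

lemma chromatic_number_comparison_graph:
  fixes P Q :: "nat \<Rightarrow> 'a \<Rightarrow> 'b::linorder" and \<phi> :: "comp list \<Rightarrow> bool"
  assumes G: "simple_graph V E" and no_clique: "\<not> has_clique V E s" and small: "card V \<le> 2 ^ k"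
    and E_iff: "\<And>x y. x \<in> V \<Longrightarrow> y \<in> V \<Longrightarrow> x \<noteq> y \<Longrightarrow>
      E x y \<longleftrightarrow> \<phi> (map (\<lambda>i. compare default (P i x) (Q i y)) [0..<t])"
  shows "chromatic_number V E \<le> (3 * (k + 2)) ^ t * s ^ 3 ^ t"
proof -
  have "finite V"
    using G unfolding simple_graph_def by blast
  define W where "W i = P i ` V \<union> Q i ` V" for i
  define p q where "p i v = rank_in (W i) (P i v)" and "q i v = rank_in (W i) (Q i v)" for i v
  have "chromatic_number V E \<le> (3 * (k + 1 + 1)) ^ t * s ^ 3 ^ t"
  proof (rule chromatic_number_nat_comparison_graph[where p = p and q = q and \<phi> = \<phi>, OF G no_clique])
    show "p i v < 2 ^ (k + 1)" "q i v < 2 ^ (k + 1)" if "v \<in> V" for i v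
      unfolding p_def q_def W_def using rank_in_Un_image_less[OF \<open>finite V\<close> small] that by blast+
    show "E x y \<longleftrightarrow> \<phi> (map (\<lambda>i. compare default (p i x) (q i y)) [0..<t])"
      if "x \<in> V" "y \<in> V" "x \<noteq> y" for x y
    proof -
      have "finite (W i)" "P i x \<in> W i" "Q i y \<in> W i" for i
        unfolding W_def using \<open>finite V\<close> that by auto
      then show ?thesis
        unfolding E_iff[OF that] p_def q_def by (simp add: compare_rank_in)
    qed
  qed
  then show ?thesis
    by (simp add: numeral_eq_Suc)
qed

section \<open>Semilinear graphs\<close>

definition comparison_graph :: "nat \<Rightarrow> 'a set \<Rightarrow> ('a \<Rightarrow> 'a \<Rightarrow> bool) \<Rightarrow> bool" where
  "comparison_graph t V E \<longleftrightarrow> (\<exists>(P :: nat \<Rightarrow> 'a \<Rightarrow> real) Q \<phi>. \<forall>x\<in>V. \<forall>y\<in>V. x \<noteq> y \<longrightarrow>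
     (E x y \<longleftrightarrow> \<phi> (map (\<lambda>i. compare default (P i x) (Q i y)) [0..<t])))"

lemma semilinear_imp_comparison_graph:
  assumes "semilinear t V E"
  shows "comparison_graph t V E"
proof -
  obtain d a c b \<phi> where E_iff: "\<forall>x\<in>V. \<forall>y\<in>V. x \<noteq> y \<longrightarrow>
      (E x y \<longleftrightarrow> \<phi> (sign_pattern t (\<lambda>i. lin_fun d (a i) (c i) (b i)) x y))"
    using assms unfolding semilinear_def by blast
  define P where "P i x = b i + (\<Sum>j<d. a i j * x ! j)" for i x
  define Q where "Q i y = - (\<Sum>j<d. c i j * y ! j)" for i y
  define signs :: "comp \<Rightarrow> bool list" where "signs r = [r = Less, r \<noteq> Greater, r = Equiv]" for r
  have "sign_pattern t (\<lambda>i. lin_fun d (a i) (c i) (b i)) x y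
      = concat (map signs (map (\<lambda>i. compare default (P i x) (Q i y)) [0..<t]))" for x y
    unfolding sign_pattern_def lin_fun_def signs_def P_def Q_def compare_default_eq
    by (auto intro!: arg_cong[where f = concat])
  then show ?thesis
    unfolding comparison_graph_def using E_iff
    by (intro exI[of _ P] exI[of _ Q] exI[of _ "\<lambda>rs. \<phi> (concat (map signs rs))"]) simp
qed

lemma chromatic_number_semilinear:
  assumes "simple_graph V E" "semilinear t V E" "\<not> has_clique V E s" "card V \<le> 2 ^ k"
  shows "chromatic_number V E \<le> (3 * (k + 2)) ^ t * s ^ 3 ^ t"
proof -
  obtain P Q :: "nat \<Rightarrow> real list \<Rightarrow> real" and \<phi> where E_iff: "\<forall>x\<in>V. \<forall>y\<in>V. x \<noteq> y \<longrightarrow>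
      (E x y \<longleftrightarrow> \<phi> (map (\<lambda>i. compare default (P i x) (Q i y)) [0..<t]))"
    using semilinear_imp_comparison_graph[OF assms(2)] unfolding comparison_graph_def by blast
  show ?thesis
  proof (rule chromatic_number_comparison_graph[where P = P and Q = Q and \<phi> = \<phi>, OF assms(1,3,4)])
    show "E x y \<longleftrightarrow> \<phi> (map (\<lambda>i. compare default (P i x) (Q i y)) [0..<t])"
      if "x \<in> V" "y \<in> V" "x \<noteq> y" for x y
      using E_iff that by blast
  qed
qed

lemma ceiling_log2_le_ln:
  assumes "n \<ge> 2"
  shows "3 * real (nat \<lceil>log 2 (real n)\<rceil> + 2) \<le> 24 * ln (real n)"
proof -
  have ln2: "1/2 \<le> ln (2::real)"
    using ln_diff_le[of 1 2] by simp
  have "ln 2 \<le> ln (real n)"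
    using assms by simp
  then have ln_n: "ln (real n) \<ge> 1/2"
    using ln2 by linarith
  have "log 2 (real n) = ln (real n) / ln 2"
    by (simp add: log_def)
  also have "\<dots> \<le> 2 * ln (real n)"
    using ln2 ln_n by (simp add: divide_le_eq)
  moreover have "log 2 (real n) \<ge> 0"
    using assms by simp
  ultimately have "real (nat \<lceil>log 2 (real n)\<rceil>) \<le> 2 * ln (real n) + 1"
    using of_int_ceiling_le_add_one[of "log 2 (real n)"] by linarith
  then show ?thesis
    using ln_n unfolding of_nat_add by simp
qed

lemma le_two_power_ceiling_log2:
  assumes "n > 0"
  shows "n \<le> 2 ^ nat \<lceil>log 2 (real n)\<rceil>"
proof -
  have "real n = 2 powr log 2 (real n)"
    using assms by simp
  also have "\<dots> \<le> 2 powr real (nat \<lceil>log 2 (real n)\<rceil>)"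
    by (intro powr_mono) linarith+
  also have "\<dots> = 2 ^ nat \<lceil>log 2 (real n)\<rceil>"
    by (simp add: powr_realpow)
  finally show ?thesis
    by (metis of_nat_le_iff of_nat_numeral of_nat_power)
qed

theorem theorem1p4:
  fixes t :: nat
  assumes "t > 0"
  shows "\<exists>\<alpha> \<beta> \<gamma> :: real. \<alpha> > 0 \<and> \<beta> > 0 \<and> \<gamma> > 0 \<and>
    (\<forall>(s::nat) (n::nat) (V :: real list set) (E :: real list \<Rightarrow> real list \<Rightarrow> bool).
       s > 0 \<longrightarrow> n \<ge> 2 \<longrightarrow> simple_graph V E \<longrightarrow> semilinear t V E \<longrightarrow>
       card V = n \<longrightarrow> \<not> has_clique V E s \<longrightarrow>
       real (chromatic_number V E) \<le> \<alpha> * real s powr \<beta> * ln (real n) powr \<gamma>)"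
proof (rule exI[of _ "24 ^ t"], rule exI[of _ "real (3 ^ t)"], rule exI[of _ "real t"],
    intro conjI allI impI)
  fix s n :: nat and V :: "real list set" and E :: "real list \<Rightarrow> real list \<Rightarrow> bool"
  assume "s > 0" "n \<ge> 2" and G: "simple_graph V E" "semilinear t V E" "card V = n"
    and no_clique: "\<not> has_clique V E s"
  define k where "k = nat \<lceil>log 2 (real n)\<rceil>"
  have "card V \<le> 2 ^ k"
    unfolding k_def G(3) using \<open>n \<ge> 2\<close> by (simp add: le_two_power_ceiling_log2)
  then have "chromatic_number V E \<le> (3 * (k + 2)) ^ t * s ^ 3 ^ t"
    by (rule chromatic_number_semilinear[OF G(1,2) no_clique])
  then have "real (chromatic_number V E) \<le> real (3 * (k + 2)) ^ t * real s ^ 3 ^ t"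
    by (metis of_nat_le_iff of_nat_mult of_nat_power)
  also have "\<dots> \<le> (24 * ln (real n)) ^ t * real s ^ 3 ^ t"
    using ceiling_log2_le_ln[OF \<open>n \<ge> 2\<close>] unfolding k_def
    by (intro mult_right_mono power_mono) simp_all
  also have "\<dots> = 24 ^ t * real s powr real (3 ^ t) * ln (real n) powr real t"
    using powr_realpow[of "real s" "3 ^ t"] powr_realpow[of "ln (real n)" t] \<open>s > 0\<close> \<open>n \<ge> 2\<close>
    by (simp add: power_mult_distrib)
  finally show "real (chromatic_number V E) \<le> 24 ^ t * real s powr real (3 ^ t) * ln (real n) powr real t" .
qed (use \<open>t > 0\<close> in simp_all)

end
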